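(* Let $k\ge 0$, $m=2k+1$, and $ER_m(\hat K)=P_m(\hat K)+\mathrm{span}\{\hat x^{m}\hat y-\hat x\hat y^{m},\ \hat x^{m+1}-\hat y^{m+1}\}$. Suppose $\hat v\in ER_m(\hat K)$ satisfies $\int_{\hat e}\hat v\,q\,ds=0$ for every $q\in P_{2k}(\hat e)$ and every edge $\hat e$ of $\hat K$, and $\hat v$ vanishes at all points of $I$. Then $\hat v\equiv 0$.
   Context: $\hat K=[-1,1]^2$; $P_n(M)$ denotes polynomials of degree $\le n$ on $M$ (for an edge, polynomials of degree $\le n$ in the edge variable). $I$ is a set of $(2k-1)(k-1)$ interior points of $\hat K$ unisolvent for $P_{2k-3}(\hat K)$ (every polynomial in $P_{2k-3}(\hat K)$ is uniquely determined by its values on $I$); $I=\emptyset$ when $k\le 1$. *)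

theory Defs
  imports "HOL-Analysis.Analysis" "HOL-Computational_Algebra.Polynomial"
begin

definition Khat :: "(real \<times> real) set" where
  "Khat = {(x, y). -1 \<le> x \<and> x \<le> 1 \<and> -1 \<le> y \<and> y \<le> 1}"

definition Khat_interior :: "(real \<times> real) set" where
  "Khat_interior = {(x, y). -1 < x \<and> x < 1 \<and> -1 < y \<and> y < 1}"

definition P2 :: "nat \<Rightarrow> (real \<times> real \<Rightarrow> real) set" where
  "P2 n = {f. \<exists>c :: nat \<Rightarrow> nat \<Rightarrow> real. \<forall>x y.
      f (x, y) = (\<Sum>(i, j)\<in>{(i, j). i + j \<le> n}. c i j * x ^ i * y ^ j)}"

definition ER :: "nat \<Rightarrow> (real \<times> real \<Rightarrow> real) set" where
  "ER m = {f. \<exists>p\<in>P2 m. \<exists>a b :: real. \<forall>x y.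
      f (x, y) = p (x, y) + a * (x ^ m * y - x * y ^ m) + b * (x ^ (m + 1) - y ^ (m + 1))}"

text \<open>The four edges of K, parametrised by arc length over [-1,1] (unit speed).\<close>
definition edges :: "(real \<Rightarrow> real \<times> real) set" where
  "edges = {(\<lambda>t. (t, -1)), (\<lambda>t. (1, t)), (\<lambda>t. (t, 1)), (\<lambda>t. (-1, t))}"

definition unisolvent :: "(real \<times> real) set \<Rightarrow> (real \<times> real \<Rightarrow> real) set \<Rightarrow> bool" where
  "unisolvent S V \<longleftrightarrow> (\<forall>p\<in>V. \<forall>q\<in>V. (\<forall>z\<in>S. p z = q z) \<longrightarrow> p = q)"

end

theory Submission
  imports Defs
begin

text \<open>On each edge of the square the trace of \<open>v\<close> is a polynomial of degree at most \<open>m + 1\<close>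
  orthogonal to all polynomials of degree below \<open>m\<close>, hence a combination of the Legendre
  polynomials of degrees \<open>m + 1\<close> and \<open>m\<close> with weights given by its two leading coefficients.
  On the edge \<open>y = s\<close> these are \<open>b\<close> and \<open>c + a s\<close>, on the edge \<open>x = s\<close> they are \<open>-b\<close> and
  \<open>d - a s\<close>, where \<open>a, b\<close> are the weights of the two extra functions of \<open>ER\<^sub>m\<close> and \<open>c, d\<close> the
  coefficients of \<open>x\<^sup>m, y\<^sup>m\<close>. Since the Legendre polynomials of degree \<open>m + 1\<close> and \<open>m\<close> are
  even and odd, matching the values at the four corners forces \<open>a = b = c = d = 0\<close>. Then all
  edge traces vanish, so \<open>v \<in> P\<^sub>m\<close> vanishes on the boundary and
  \<open>v = (1 - x\<^sup>2)(1 - y\<^sup>2) w\<close> with \<open>w \<in> P\<^sub>m\<^sub>-\<^sub>4 = P\<^sub>2\<^sub>k\<^sub>-\<^sub>3\<close>, which vanishes on the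
  unisolvent set \<open>I\<close>.\<close>

definition poly_integral :: "real poly \<Rightarrow> real" where
  "poly_integral p = integral {-1..1} (poly p)"

lemma poly_integral_has_integral: "(poly p has_integral poly_integral p) {-1..1}"
  unfolding poly_integral_def
  by (intro integrable_integral integrable_continuous_real continuous_intros)

lemma poly_integral_add: "poly_integral (p + q) = poly_integral p + poly_integral q"
  using has_integral_add[OF poly_integral_has_integral poly_integral_has_integral, of p q]
  by (simp add: poly_integral_def integral_unique poly_add[abs_def])

lemma poly_integral_diff: "poly_integral (p - q) = poly_integral p - poly_integral q"
  using has_integral_diff[OF poly_integral_has_integral poly_integral_has_integral, of p q]
  by (simp add: poly_integral_def integral_unique poly_diff[abs_def])

lemma poly_integral_smult: "poly_integral (smult c p) = c * poly_integral p"
  by (simp add: poly_integral_def poly_smult[abs_def])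

lemma poly_integral_pderiv: "poly_integral (pderiv p) = poly p 1 - poly p (-1)"
proof -
  have "(poly (pderiv p) has_integral poly p 1 - poly p (-1)) {-1..1}"
    by (rule fundamental_theorem_of_calculus)
       (auto simp: has_real_derivative_iff_has_vector_derivative[symmetric]
             intro: DERIV_subset poly_DERIV)
  then show ?thesis by (simp add: poly_integral_def integral_unique)
qed

lemma poly_integral_by_parts:
  "poly_integral (pderiv p * q)
     = poly p 1 * poly q 1 - poly p (-1) * poly q (-1) - poly_integral (p * pderiv q)"
  using poly_integral_pderiv[of "p * q"]
  by (simp add: pderiv_mult poly_integral_add mult.commute)

lemma poly_eq_0_if_zero_on_open_interval:
  fixes p :: "real poly"
  assumes "\<And>x. -1 < x \<Longrightarrow> x < 1 \<Longrightarrow> poly p x = 0"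
  shows "p = 0"
proof (rule ccontr)
  assume "p \<noteq> 0"
  then have "finite {x. poly p x = 0}" by (rule poly_roots_finite)
  moreover have "{-1<..<1::real} \<subseteq> {x. poly p x = 0}" using assms by auto
  ultimately have "finite {-1<..<1::real}" by (rule finite_subset[rotated])
  then show False using infinite_Ioo[of "-1::real" 1] by simp
qed

lemma one_minus_square_pos: "-1 < x \<Longrightarrow> x < 1 \<Longrightarrow> 0 < 1 - (x::real)\<^sup>2"
  by (simp add: abs_square_less_1 abs_less_iff)

lemma poly_integral_weighted_square_eq_0:
  assumes w: "\<And>x. -1 < x \<Longrightarrow> x < 1 \<Longrightarrow> 0 < poly w x"
    and "poly_integral (w * p * p) = 0"
  shows "p = 0"
proof (rule poly_eq_0_if_zero_on_open_interval)
  fix x :: real assume x: "-1 < x" "x < 1"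
  have nonneg: "\<forall>t\<in>box (-1) 1. 0 \<le> poly (w * p * p) t"
    using w by (auto simp: box_real less_imp_le mult.assoc)
  have "continuous_on (cbox (-1) 1) (poly (w * p * p))"
    by (intro continuous_intros)
  moreover have "(poly (w * p * p) has_integral 0) (cbox (-1) 1)"
    using poly_integral_has_integral[of "w * p * p"] assms(2) by (simp add: cbox_interval)
  ultimately have "poly (w * p * p) x = 0"
    using nonneg x
    by (intro has_integral_0_cbox_imp_0[of "-1" 1 "poly (w * p * p)"]) (auto simp: box_real)
  then show "poly p x = 0" using w[OF x] by simp
qed

lemma poly_integral_square_eq_0: "poly_integral (p * p) = 0 \<Longrightarrow> p = 0"
  using poly_integral_weighted_square_eq_0[of 1 p] by simp

definition rodrigues :: "nat \<Rightarrow> real poly" where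
  "rodrigues n = (pderiv ^^ n) ([:-1, 0, 1:] ^ n)"

lemma root_power_dvd_higher_pderiv:
  fixes p :: "'a::{idom, semiring_char_0} poly"
  shows "[:-a, 1:] ^ (k + i) dvd p \<Longrightarrow> [:-a, 1:] ^ k dvd (pderiv ^^ i) p"
proof (induction i arbitrary: k)
  case (Suc i)
  have "[:-a, 1:] ^ (Suc k + i) dvd p"
    using Suc.prems by (simp only: add_Suc add_Suc_right)
  then have "[:-a, 1:] ^ Suc k dvd (pderiv ^^ i) p" by (rule Suc.IH)
  then obtain q where q: "(pderiv ^^ i) p = [:-a, 1:] ^ Suc k * q" by (auto elim: dvdE)
  have "(pderiv ^^ Suc i) p
        = [:-a, 1:] ^ k * ([:-a, 1:] * pderiv q + smult (of_nat (Suc k)) q)"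
    unfolding funpow.simps comp_def q lemma_order_pderiv1 by (simp add: algebra_simps)
  then show ?case by simp
qed simp

lemma poly_higher_pderiv_at_root:
  fixes p :: "'a::{idom, semiring_char_0} poly"
  assumes "[:-a, 1:] ^ n dvd p" and "i < n"
  shows "poly ((pderiv ^^ i) p) a = 0"
proof -
  have "[:-a, 1:] ^ (n - i) dvd (pderiv ^^ i) p"
    using assms by (intro root_power_dvd_higher_pderiv) simp
  moreover have "[:-a, 1:] dvd [:-a, 1:] ^ (n - i)"
    using assms(2) by (simp add: dvd_power)
  ultimately show ?thesis by (simp add: poly_eq_0_iff_dvd dvd_trans)
qed

lemma poly_higher_pderiv_square_minus_one_power:
  assumes "i < n"
  shows "poly ((pderiv ^^ i) ([:-1, 0, 1:] ^ n)) 1 = (0::real)"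
    and "poly ((pderiv ^^ i) ([:-1, 0, 1:] ^ n)) (-1) = (0::real)"
proof -
  have factors: "[:-1, 0, 1:] ^ n = [:-1, 1:] ^ n * [:-(-1), 1::real:] ^ n"
    by (simp add: power_mult_distrib[symmetric])
  have "[:-1, 1:] ^ n dvd [:-1, 0, 1::real:] ^ n" "[:-(-1), 1:] ^ n dvd [:-1, 0, 1::real:] ^ n"
    by (simp_all only: factors dvd_triv_left dvd_triv_right)
  from this[THEN poly_higher_pderiv_at_root, OF assms]
  show "poly ((pderiv ^^ i) ([:-1, 0, 1:] ^ n)) 1 = (0::real)"
    and "poly ((pderiv ^^ i) ([:-1, 0, 1:] ^ n)) (-1) = (0::real)"
    by simp_all
qed

lemma poly_integral_rodrigues_mult:
  "j \<le> n \<Longrightarrow> poly_integral (rodrigues n * q) =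
     (-1) ^ j * poly_integral ((pderiv ^^ (n - j)) ([:-1, 0, 1:] ^ n) * (pderiv ^^ j) q)"
proof (induction j)
  case (Suc j)
  define F where "F = (pderiv ^^ (n - Suc j)) ([:-1, 0, 1:] ^ n :: real poly)"
  have "n - j = Suc (n - Suc j)" using Suc.prems by simp
  then have F: "(pderiv ^^ (n - j)) ([:-1, 0, 1:] ^ n) = pderiv F"
    by (simp add: F_def)
  have "poly F 1 = 0" "poly F (-1) = 0"
    using Suc.prems unfolding F_def by (simp_all add: poly_higher_pderiv_square_minus_one_power)
  then have "poly_integral (pderiv F * (pderiv ^^ j) q)
             = - poly_integral (F * (pderiv ^^ Suc j) q)"
    by (simp add: poly_integral_by_parts)
  then show ?case using Suc by (simp add: F F_def)
qed (simp add: rodrigues_def)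

lemma higher_pderiv_eq_0: "degree q < n \<Longrightarrow> (pderiv ^^ n) q = 0"
  by (simp add: poly_eq_iff coeff_higher_pderiv coeff_eq_0)

lemma poly_integral_rodrigues_orthogonal:
  "degree q < n \<Longrightarrow> poly_integral (rodrigues n * q) = 0"
  using poly_integral_rodrigues_mult[of n n q]
  by (simp add: higher_pderiv_eq_0 poly_integral_def poly_0[abs_def])

lemma coeff_rodrigues:
  "coeff (rodrigues n) i = pochhammer (of_nat (Suc i)) n * coeff ([:-1, 0, 1:] ^ n) (i + n)"
  by (simp add: rodrigues_def coeff_higher_pderiv)

lemma degree_rodrigues: "degree (rodrigues n) = n"
  by (simp add: rodrigues_def degree_higher_pderiv degree_power_eq)

lemma rodrigues_neq_0: "rodrigues n \<noteq> 0"
proof -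
  have "lead_coeff ([:-1, 0, 1:] ^ n :: real poly) = 1"
    by (simp add: lead_coeff_power)
  then have "coeff ([:-1, 0, 1:] ^ n :: real poly) (n + n) = 1"
    by (simp add: degree_power_eq mult_2)
  then have "coeff (rodrigues n) n \<noteq> 0"
    by (simp add: coeff_rodrigues pochhammer_eq_0_iff)
  then show ?thesis by auto
qed

lemma higher_pderiv_reflect:
  fixes p :: "'a::idom poly"
  shows "(pderiv ^^ j) (p \<circ>\<^sub>p [:0, -1:])
           = smult ((-1) ^ j) ((pderiv ^^ j) p \<circ>\<^sub>p [:0, -1:])"
  by (induction j) (simp_all add: pderiv_pcompose pderiv_smult pderiv_pCons)

lemma rodrigues_reflect: "rodrigues n \<circ>\<^sub>p [:0, -1:] = smult ((-1) ^ n) (rodrigues n)"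
proof -
  have "[:-1, 0, 1:] ^ n \<circ>\<^sub>p [:0, -1:] = ([:-1, 0, 1:] ^ n :: real poly)"
    by (simp add: poly_eq_poly_eq_iff[symmetric] poly_pcompose fun_eq_iff)
  then have "rodrigues n = smult ((-1) ^ n) (rodrigues n \<circ>\<^sub>p [:0, -1:])"
    using higher_pderiv_reflect[of n "[:-1, 0, 1:] ^ n :: real poly"]
    by (simp add: rodrigues_def)
  then have "smult ((-1) ^ n) (rodrigues n)
             = smult ((-1) ^ n) (smult ((-1) ^ n) (rodrigues n \<circ>\<^sub>p [:0, -1:]))"
    by (rule arg_cong)
  then show ?thesis by (simp only: smult_smult power_mult_distrib[symmetric]) simp
qed

lemma coeff_rodrigues_eq_0: "odd (n + i) \<Longrightarrow> coeff (rodrigues n) i = 0"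
  using arg_cong[OF rodrigues_reflect[of n], of "\<lambda>p. coeff p i"]
  by (auto simp: coeff_pcompose_linear minus_one_power_iff)

lemma poly_rodrigues_minus: "poly (rodrigues n) (-x) = (-1) ^ n * poly (rodrigues n) x"
  using arg_cong[OF rodrigues_reflect[of n], of "\<lambda>p. poly p x"] by (simp add: poly_pcompose)

lemma one_minus_square_dvd:
  fixes p :: "real poly"
  assumes "poly p 1 = 0" "poly p (-1) = 0"
  shows "[:1, 0, -1:] dvd p"
proof -
  obtain q where q: "p = [:-1, 1:] * q"
    using assms(1) by (auto simp: poly_eq_0_iff_dvd elim: dvdE)
  then have "poly q (-1) = 0" using assms(2) by simp
  then obtain r where "q = [:-(-1), 1:] * r" by (auto simp only: poly_eq_0_iff_dvd elim: dvdE)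
  then have "p = [:1, 0, -1:] * (-r)" by (simp add: q)
  then show ?thesis by (rule dvdI)
qed

lemma poly_rodrigues_one_neq_0: "poly (rodrigues n) 1 \<noteq> 0"
proof
  assume one: "poly (rodrigues n) 1 = 0"
  then have "poly (rodrigues n) (-1) = 0" using poly_rodrigues_minus[of n 1] by simp
  with one have "[:1, 0, -1:] dvd rodrigues n" by (rule one_minus_square_dvd)
  then obtain g where g: "rodrigues n = [:1, 0, -1:] * g" by (rule dvdE)
  have "g \<noteq> 0" using rodrigues_neq_0[of n] by (auto simp: g)
  have "degree (rodrigues n) = degree [:1, 0, -1::real:] + degree g"
    unfolding g by (rule degree_mult_eq) (use \<open>g \<noteq> 0\<close> in simp_all)
  then have "degree g < n" by (simp add: degree_rodrigues)
  then have "poly_integral ([:1, 0, -1:] * g * g) = 0"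
    using poly_integral_rodrigues_orthogonal[of g n] by (simp add: g)
  moreover have "0 < poly [:1, 0, -1:] x" if "-1 < x" "x < 1" for x :: real
    using one_minus_square_pos[OF that] by (simp add: power2_eq_square)
  ultimately have "g = 0" by (rule poly_integral_weighted_square_eq_0[rotated])
  with \<open>g \<noteq> 0\<close> show False by simp
qed

definition legendre_end :: "nat \<Rightarrow> real" where
  "legendre_end n = poly (rodrigues n) 1 / lead_coeff (rodrigues n)"

lemma legendre_end_neq_0: "legendre_end n \<noteq> 0"
  by (simp add: legendre_end_def poly_rodrigues_one_neq_0 rodrigues_neq_0)

lemma orthogonal_poly_eq_rodrigues_combination:
  fixes p :: "real poly"
  assumes deg: "degree p \<le> n + 1"
    and orth: "\<And>q. degree q < n \<Longrightarrow> poly_integral (p * q) = 0"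
  shows "p = smult (coeff p (n + 1) / lead_coeff (rodrigues (n + 1))) (rodrigues (n + 1))
           + smult (coeff p n / lead_coeff (rodrigues n)) (rodrigues n)"
    (is "p = smult ?\<beta> ?R1 + smult ?\<alpha> ?R0")
proof -
  define r where "r = p - smult ?\<beta> ?R1 - smult ?\<alpha> ?R0"
  have lead: "lead_coeff (rodrigues k) = coeff (rodrigues k) k" for k
    by (simp add: degree_rodrigues)
  have lead_neq_0: "coeff (rodrigues k) k \<noteq> 0" for k
    using rodrigues_neq_0[of k] by (simp flip: lead)
  have parity: "coeff (rodrigues (n + 1)) n = 0" by (simp add: coeff_rodrigues_eq_0)
  have above: "coeff (rodrigues k) i = 0" if "k < i" for k i
    using that by (simp add: coeff_eq_0 degree_rodrigues)
  have "coeff r i = 0" if "n \<le> i" for i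
  proof -
    consider "i = n" | "i = n + 1" | "n + 1 < i" using \<open>n \<le> i\<close> by linarith
    then show ?thesis
      using deg lead_neq_0 parity above by cases (auto simp: r_def lead coeff_eq_0)
  qed
  then have "r = 0 \<or> degree r < n"
    using leading_coeff_0_iff not_le by blast
  moreover have "poly_integral (r * r) = 0" if "degree r < n"
  proof -
    have "r * r = p * r - smult ?\<beta> (?R1 * r) - smult ?\<alpha> (?R0 * r)"
      by (subst (1) r_def) (simp add: algebra_simps)
    then show ?thesis
      using that orth poly_integral_rodrigues_orthogonal
      by (simp add: poly_integral_diff poly_integral_smult)
  qed
  ultimately have "r = 0" using poly_integral_square_eq_0 by blast
  then show ?thesis by (simp add: r_def algebra_simps)
qed

lemma endpoint_values_of_orthogonal_poly:
  fixes p :: "real poly"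
  assumes "degree p \<le> n + 1" and "\<And>q. degree q < n \<Longrightarrow> poly_integral (p * q) = 0"
  shows "poly p 1 = coeff p (n + 1) * legendre_end (n + 1) + coeff p n * legendre_end n"
      (is ?at_one)
    and "poly p (-1) = (-1) ^ (n + 1) * coeff p (n + 1) * legendre_end (n + 1)
                       + (-1) ^ n * coeff p n * legendre_end n"
      (is ?at_minus_one)
proof -
  obtain \<beta> \<alpha> where p: "p = smult \<beta> (rodrigues (n + 1)) + smult \<alpha> (rodrigues n)"
    and \<beta>: "\<beta> = coeff p (n + 1) / lead_coeff (rodrigues (n + 1))"
    and \<alpha>: "\<alpha> = coeff p n / lead_coeff (rodrigues n)"
    using orthogonal_poly_eq_rodrigues_combination[OF assms] by blast
  have "poly p x = \<beta> * poly (rodrigues (n + 1)) x + \<alpha> * poly (rodrigues n) x" for x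
    using arg_cong[OF p, of "\<lambda>q. poly q x"] by simp
  then show ?at_one and ?at_minus_one
    by (simp_all add: \<alpha> \<beta> legendre_end_def poly_rodrigues_minus[of _ 1] mult_ac)
qed

lemma sum_triangle:
  fixes n :: nat
  shows "(\<Sum>(i, j)\<in>{(i, j). i + j \<le> n}. h i j) = (\<Sum>j\<le>n. \<Sum>i\<le>n - j. h i j)"
proof -
  have "(\<Sum>j\<le>n. \<Sum>i\<le>n - j. h i j) = (\<Sum>(j, i)\<in>(SIGMA j:{..n}. {..n - j}). h i j)"
    by (rule sum.Sigma) auto
  also have "\<dots> = (\<Sum>(i, j)\<in>{(i, j). i + j \<le> n}. h i j)"
    by (rule sum.reindex_bij_witness[of _ prod.swap prod.swap]) auto
  finally show ?thesis ..
qed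

lemma poly_eq_sum_coeff:
  fixes p :: "'a::comm_semiring_1 poly"
  shows "degree p \<le> n \<Longrightarrow> poly p x = (\<Sum>i\<le>n. coeff p i * x ^ i)"
  by (subst poly_as_sum_of_monoms'[symmetric]) (simp_all add: poly_sum poly_monom)

lemma P2_coeff_polysE:
  assumes "f \<in> P2 n"
  obtains G where "\<And>j. G j \<noteq> 0 \<Longrightarrow> degree (G j) + j \<le> n"
    and "\<And>x y. f (x, y) = (\<Sum>j\<le>n. poly (G j) x * y ^ j)"
proof -
  obtain c
    where c: "\<And>x y. f (x, y) = (\<Sum>(i, j)\<in>{(i, j). i + j \<le> n}. c i j * x ^ i * y ^ j)"
    using assms by (auto simp: P2_def)
  define G where "G j = (if j \<le> n then \<Sum>i\<le>n - j. monom (c i j) i else 0)" for j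
  have "degree (G j) + j \<le> n" if "G j \<noteq> 0" for j
  proof -
    have "degree (G j) \<le> n - j"
      by (auto simp: G_def intro!: degree_sum_le order.trans[OF degree_monom_le])
    moreover have "j \<le> n" using that by (auto simp: G_def split: if_splits)
    ultimately show ?thesis by simp
  qed
  moreover have "f (x, y) = (\<Sum>j\<le>n. poly (G j) x * y ^ j)" for x y
    by (simp add: c sum_triangle G_def poly_sum poly_monom sum_distrib_right)
  ultimately show ?thesis using that by blast
qed

lemma P2_coeff_polysI:
  assumes deg: "\<And>j. G j \<noteq> 0 \<Longrightarrow> degree (G j) + j \<le> n"
    and f: "\<And>x y. f (x, y) = (\<Sum>j\<le>N. poly (G j) x * y ^ j)"
  shows "f \<in> P2 n"
proof -
  have vanish: "G j = 0" if "n < j" for j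
    using deg[of j] that by fastforce
  define c where "c i j = (if j \<le> N then coeff (G j) i else 0)" for i j
  have "f (x, y) = (\<Sum>(i, j)\<in>{(i, j). i + j \<le> n}. c i j * x ^ i * y ^ j)" for x y
  proof -
    have inner: "(\<Sum>i\<le>n - j. c i j * x ^ i) = (if j \<le> N then poly (G j) x else 0)" for j
      using deg[of j] poly_eq_sum_coeff[of "G j" "n - j" x]
      by (cases "G j = 0") (auto simp: c_def)
    have "(\<Sum>j\<le>N. poly (G j) x * y ^ j)
          = (\<Sum>j\<le>n. (if j \<le> N then poly (G j) x else 0) * y ^ j)"
      using vanish by (intro sum.mono_neutral_cong) auto
    then show ?thesis
      by (simp add: f sum_triangle inner[symmetric] sum_distrib_right mult.assoc)
  qed
  then show ?thesis by (auto simp: P2_def)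
qed

lemma P2_zero: "(\<lambda>_. 0) \<in> P2 n"
  by (auto simp: P2_def intro: exI[of _ "\<lambda>_ _. 0"])

lemma P2_swap:
  assumes "f \<in> P2 n"
  shows "f \<circ> prod.swap \<in> P2 n"
proof -
  obtain c
    where c: "\<And>x y. f (x, y) = (\<Sum>(i, j)\<in>{(i, j). i + j \<le> n}. c i j * x ^ i * y ^ j)"
    using assms by (auto simp: P2_def)
  have "(\<Sum>(i, j)\<in>{(i, j). i + j \<le> n}. c i j * y ^ i * x ^ j)
      = (\<Sum>(i, j)\<in>{(i, j). i + j \<le> n}. c j i * x ^ i * y ^ j)" for x y :: real
    by (rule sum.reindex_bij_witness[of _ prod.swap prod.swap]) auto
  then show ?thesis by (auto simp: P2_def c)
qed

lemma P2_slice: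
  assumes "f \<in> P2 n"
  obtains p where "\<And>x. f (x, y) = poly p x"
proof -
  obtain G where f: "\<And>x y. f (x, y) = (\<Sum>j\<le>n. poly (G j) x * y ^ j)"
    using P2_coeff_polysE[OF assms] by metis
  have "f (x, y) = poly (\<Sum>j\<le>n. smult (y ^ j) (G j)) x" for x
    by (simp add: f poly_sum mult.commute)
  then show ?thesis by (rule that)
qed

lemma P2_factor_one_minus_square:
  assumes f: "f \<in> P2 n" and edges: "\<And>y. f (1, y) = 0" "\<And>y. f (-1, y) = 0"
  obtains g where "g \<in> P2 (n - 2)" and "n < 2 \<Longrightarrow> g = (\<lambda>_. 0)"
    and "\<And>x y. f (x, y) = (1 - x\<^sup>2) * g (x, y)"
proof -
  obtain G where deg: "\<And>j. G j \<noteq> 0 \<Longrightarrow> degree (G j) + j \<le> n"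
    and fG: "\<And>x y. f (x, y) = (\<Sum>j\<le>n. poly (G j) x * y ^ j)"
    using P2_coeff_polysE[OF f] by blast
  have root: "poly (G j) s = 0" if "s = 1 \<or> s = -1" for s j
  proof (cases "j \<le> n")
    case True
    have "\<forall>y. (\<Sum>j\<le>n. poly (G j) s * y ^ j) = 0" using that edges fG by auto
    with True show ?thesis by (subst (asm) polyfun_eq_0) auto
  next
    case False
    then show ?thesis using deg[of j] by fastforce
  qed
  have "[:1, 0, -1:] dvd G j" for j
    using one_minus_square_dvd[OF root root] by simp
  then have "\<exists>h. G j = [:1, 0, -1:] * h" for j by (meson dvdE)
  then obtain H where H: "\<And>j. G j = [:1, 0, -1:] * H j" by metis
  have degH: "degree (H j) + j \<le> n - 2" and big: "2 \<le> n" if "H j \<noteq> 0" for j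
  proof -
    have "degree (G j) = degree [:1, 0, -1::real:] + degree (H j)"
      unfolding H by (rule degree_mult_eq) (use that in simp_all)
    moreover have "G j \<noteq> 0" using that by (simp only: H mult_eq_0_iff) simp
    ultimately show "degree (H j) + j \<le> n - 2" "2 \<le> n" using deg[of j] by simp_all
  qed
  define g where "g = (\<lambda>(x, y). \<Sum>j\<le>n. poly (H j) x * y ^ j)"
  have "g \<in> P2 (n - 2)"
    using degH by (intro P2_coeff_polysI[of H _ g n]) (auto simp: g_def)
  moreover have "g = (\<lambda>_. 0)" if "n < 2"
    using big that by (force simp: g_def)
  moreover have "f (x, y) = (1 - x\<^sup>2) * g (x, y)" for x y
    by (simp add: fG g_def H sum_distrib_left power2_eq_square algebra_simps)
  ultimately show ?thesis using that by blast
qed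

lemma P2_vanishing_on_square_boundary:
  assumes f: "f \<in> P2 n"
    and vertical: "\<And>t. f (1, t) = 0" "\<And>t. f (-1, t) = 0"
    and horizontal: "\<And>t. f (t, 1) = 0" "\<And>t. f (t, -1) = 0"
  obtains w where "w \<in> P2 (n - 4)" and "n < 4 \<Longrightarrow> w = (\<lambda>_. 0)"
    and "\<And>x y. f (x, y) = (1 - x\<^sup>2) * (1 - y\<^sup>2) * w (x, y)"
proof -
  obtain g where g: "g \<in> P2 (n - 2)" and fg: "\<And>x y. f (x, y) = (1 - x\<^sup>2) * g (x, y)"
    using P2_factor_one_minus_square[OF f vertical] by metis
  have g_edge: "g (t, s) = 0" if "s = 1 \<or> s = -1" for s t
  proof -
    obtain p where p: "\<And>x. g (x, s) = poly p x"
      using P2_slice[OF g] by blast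
    have "poly p x = 0" if "-1 < x" "x < 1" for x
    proof -
      have "1 - x\<^sup>2 \<noteq> 0" using one_minus_square_pos[OF that] by simp
      moreover have "(1 - x\<^sup>2) * g (x, s) = 0"
        using fg[of x s] horizontal \<open>s = 1 \<or> s = -1\<close> by auto
      ultimately show ?thesis by (simp add: p)
    qed
    then have "p = 0" by (rule poly_eq_0_if_zero_on_open_interval)
    then show ?thesis by (simp add: p)
  qed
  obtain h where h: "h \<in> P2 (n - 2 - 2)" and h_small: "n - 2 < 2 \<Longrightarrow> h = (\<lambda>_. 0)"
    and gh: "\<And>x y. (g \<circ> prod.swap) (x, y) = (1 - x\<^sup>2) * h (x, y)"
    using P2_factor_one_minus_square[OF P2_swap[OF g]] g_edge by auto
  show ?thesis
  proof
    show "h \<circ> prod.swap \<in> P2 (n - 4)" using P2_swap[OF h] by (simp add: diff_diff_add)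
    show "h \<circ> prod.swap = (\<lambda>_. 0)" if "n < 4" using h_small that by simp
    show "f (x, y) = (1 - x\<^sup>2) * (1 - y\<^sup>2) * (h \<circ> prod.swap) (x, y)" for x y
      using gh[of y x] by (simp add: fg)
  qed
qed

lemma unisolvent_bubble_multiple_eq_0:
  assumes "unisolvent I (P2 n)" and "I \<subseteq> Khat_interior" and "w \<in> P2 n"
    and "\<And>z. z \<in> I \<Longrightarrow> (1 - (fst z)\<^sup>2) * (1 - (snd z)\<^sup>2) * w z = 0"
  shows "w = (\<lambda>_. 0)"
proof -
  have "w z = 0" if "z \<in> I" for z
    using assms(2) assms(4)[OF that] that
      one_minus_square_pos[of "fst z"] one_minus_square_pos[of "snd z"]
    by (auto simp: Khat_interior_def)
  then show ?thesis using assms(1,3) P2_zero by (auto simp: unisolvent_def)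
qed

definition er_fun ::
    "(real \<times> real \<Rightarrow> real) \<Rightarrow> real \<Rightarrow> real \<Rightarrow> nat \<Rightarrow> real \<times> real \<Rightarrow> real" where
  "er_fun p a b m =
     (\<lambda>(x, y). p (x, y) + a * (x ^ m * y - x * y ^ m) + b * (x ^ (m + 1) - y ^ (m + 1)))"

text \<open>For \<open>m = 1\<close> the function \<open>x\<^sup>m y - x y\<^sup>m\<close> is zero, so its weight can be taken to be \<open>0\<close>;
  the edge traces below rely on this.\<close>
lemma ER_E:
  assumes "v \<in> ER m"
  obtains p a b where "p \<in> P2 m" and "m = 1 \<Longrightarrow> a = 0" and "v = er_fun p a b m"
proof -
  obtain p a b where p: "p \<in> P2 m"
    and v: "\<And>x y. v (x, y)
              = p (x, y) + a * (x ^ m * y - x * y ^ m) + b * (x ^ (m + 1) - y ^ (m + 1))"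
    using assms by (auto simp: ER_def)
  show ?thesis
  proof (cases "m = 1")
    case True
    with p v show ?thesis by (intro that[of p 0 b]) (simp_all add: er_fun_def fun_eq_iff)
  next
    case False
    with p v show ?thesis by (intro that[of p a b]) (simp_all add: er_fun_def fun_eq_iff)
  qed
qed

lemma er_fun_swap:
  "er_fun p a b m \<circ> prod.swap = er_fun (p \<circ> prod.swap) (- a) (- b) m"
  by (simp add: er_fun_def fun_eq_iff right_diff_distrib)

lemma er_fun_horizontal_slice:
  assumes p: "p \<in> P2 m" and m: "1 \<le> m" and a: "1 < m \<or> a = 0"
  obtains X
  where "\<And>s. \<exists>e. degree e \<le> m + 1 \<and> coeff e (m + 1) = b \<and> coeff e m = X + a * s
                  \<and> (\<forall>x. er_fun p a b m (x, s) = poly e x)"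
proof -
  obtain G where deg: "\<And>j. G j \<noteq> 0 \<Longrightarrow> degree (G j) + j \<le> m"
    and pG: "\<And>x y. p (x, y) = (\<Sum>j\<le>m. poly (G j) x * y ^ j)"
    using P2_coeff_polysE[OF p] by blast
  have G_above: "coeff (G j) i = 0" if "m < i + j" for i j
    using deg[of j] that by (cases "G j = 0") (auto intro: coeff_eq_0)
  define e where "e s = (\<Sum>j\<le>m. smult (s ^ j) (G j)) + monom (a * s) m
                        - monom (a * s ^ m) 1 + monom b (m + 1) - [:b * s ^ (m + 1):]" for s
  have coeff_e: "coeff (e s) i = (\<Sum>j\<le>m. s ^ j * coeff (G j) i)
      + (if i = m then a * s else 0) - (if i = 1 then a * s ^ m else 0)
      + (if i = m + 1 then b else 0) - (if i = 0 then b * s ^ (m + 1) else 0)" for s i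
    by (simp add: e_def coeff_sum coeff_monom coeff_pCons split: nat.split)
  \<comment> \<open>only \<open>j = 0\<close> contributes to the coefficient of \<open>x\<^sup>m\<close>, so it does not depend on \<open>s\<close>\<close>
  have "(\<Sum>j\<le>m. s ^ j * coeff (G j) m) = coeff (G 0) m" for s
    using G_above by (subst sum.atMost_shift) simp
  moreover have "(\<Sum>j\<le>m. s ^ j * coeff (G j) i) = 0" if "m < i" for s i
    using G_above that by simp
  ultimately have "degree (e s) \<le> m + 1" "coeff (e s) (m + 1) = b"
    "coeff (e s) m = coeff (G 0) m + a * s" for s
    using m a by (auto simp: coeff_e intro: degree_le)
  moreover have "er_fun p a b m (x, s) = poly (e s) x" for x s
    by (simp add: er_fun_def e_def pG poly_sum poly_monom algebra_simps)
  ultimately show ?thesis using that by blast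
qed

lemma er_fun_horizontal_edges:
  assumes p: "p \<in> P2 m" and m: "odd m" and a: "1 < m \<or> a = 0"
    and orth: "\<And>s q. s = 1 \<or> s = -1 \<Longrightarrow> degree q < m \<Longrightarrow>
                 integral {-1..1} (\<lambda>t. er_fun p a b m (t, s) * poly q t) = 0"
  obtains X
  where "\<And>s t. s = 1 \<or> s = -1 \<Longrightarrow> t = 1 \<or> t = -1 \<Longrightarrow>
           er_fun p a b m (t, s) = b * legendre_end (m + 1) + t * (X + a * s) * legendre_end m"
    and "\<And>s t. s = 1 \<or> s = -1 \<Longrightarrow> b = 0 \<Longrightarrow> X + a * s = 0 \<Longrightarrow> er_fun p a b m (t, s) = 0"
proof -
  have "1 \<le> m" using m by (simp add: odd_pos Suc_leI)
  then obtain X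
    where slice: "\<And>s. \<exists>e. degree e \<le> m + 1 \<and> coeff e (m + 1) = b \<and> coeff e m = X + a * s
                        \<and> (\<forall>x. er_fun p a b m (x, s) = poly e x)"
    using er_fun_horizontal_slice[OF p _ a] by metis
  have endpoint:
      "er_fun p a b m (t, s) = b * legendre_end (m + 1) + t * (X + a * s) * legendre_end m"
    and vanishing: "b = 0 \<Longrightarrow> X + a * s = 0 \<Longrightarrow> er_fun p a b m (t', s) = 0"
    if s: "s = 1 \<or> s = -1" and t: "t = 1 \<or> t = -1" for s t t'
  proof -
    obtain e where deg: "degree e \<le> m + 1" and top: "coeff e (m + 1) = b"
      and next_top: "coeff e m = X + a * s" and e: "\<And>x. er_fun p a b m (x, s) = poly e x"
      using slice[of s] by blast
    have e_orth: "poly_integral (e * q) = 0" if "degree q < m" for q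
      using orth[OF s that] by (simp add: poly_integral_def e poly_mult[abs_def])
    show "er_fun p a b m (t, s)
          = b * legendre_end (m + 1) + t * (X + a * s) * legendre_end m"
      using endpoint_values_of_orthogonal_poly[OF deg e_orth] t m top
      by (auto simp: e next_top)
    show "er_fun p a b m (t', s) = 0" if "b = 0" "X + a * s = 0"
      using orthogonal_poly_eq_rodrigues_combination[OF deg e_orth] that top next_top
        e[of t']
      by simp
  qed
  show ?thesis using that endpoint vanishing by blast
qed

text \<open>The value at the corner \<open>(x, y)\<close>, computed once from the edge \<open>y = const\<close> and once
  from the edge \<open>x = const\<close>.\<close>
lemma corner_compatibility:
  fixes a b X Y r0 r1 :: real
  assumes "r1 \<noteq> 0" "r0 \<noteq> 0"
    and corner: "\<And>x y. x = 1 \<or> x = -1 \<Longrightarrow> y = 1 \<or> y = -1 \<Longrightarrow>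
                   b * r1 + x * (X + a * y) * r0 = - b * r1 + y * (Y - a * x) * r0"
  shows "b = 0 \<and> a = 0 \<and> X = 0 \<and> Y = 0"
proof -
  have "b * r1 + X * r0 + a * r0 = - b * r1 + Y * r0 - a * r0"
    using corner[of 1 1] by (simp add: algebra_simps)
  moreover have "b * r1 + X * r0 - a * r0 = - b * r1 - Y * r0 + a * r0"
    using corner[of 1 "-1"] by (simp add: algebra_simps)
  moreover have "b * r1 - X * r0 - a * r0 = - b * r1 + Y * r0 + a * r0"
    using corner[of "-1" 1] by (simp add: algebra_simps)
  moreover have "b * r1 - X * r0 + a * r0 = - b * r1 - Y * r0 - a * r0"
    using corner[of "-1" "-1"] by (simp add: algebra_simps)
  ultimately have "b * r1 = 0 \<and> a * r0 = 0 \<and> X * r0 = 0 \<and> Y * r0 = 0"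
    by linarith
  then show ?thesis using assms(1,2) by simp
qed

lemma ER_edge_orthogonal_imp_boundary_zero:
  assumes v: "v \<in> ER m" and m: "odd m"
    and orth: "\<And>s q. s = 1 \<or> s = -1 \<Longrightarrow> degree q < m \<Longrightarrow>
                 integral {-1..1} (\<lambda>t. v (t, s) * poly q t) = 0 \<and>
                 integral {-1..1} (\<lambda>t. v (s, t) * poly q t) = 0"
  shows "v \<in> P2 m"
    and "\<And>t. v (t, 1) = 0" "\<And>t. v (t, -1) = 0" "\<And>t. v (1, t) = 0" "\<And>t. v (-1, t) = 0"
proof -
  obtain p a b where p: "p \<in> P2 m" and "m = 1 \<Longrightarrow> a = 0" and v_def: "v = er_fun p a b m"
    using ER_E[OF v] by blast
  then have a: "1 < m \<or> a = 0" using m by (cases "m = 1") (auto elim: oddE)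
  have swap: "er_fun (p \<circ> prod.swap) (- a) (- b) m (t, s) = v (s, t)" for s t
    by (simp add: v_def flip: er_fun_swap)
  obtain X where hor_corner: "\<And>s t. s = 1 \<or> s = -1 \<Longrightarrow> t = 1 \<or> t = -1 \<Longrightarrow>
      v (t, s) = b * legendre_end (m + 1) + t * (X + a * s) * legendre_end m"
    and hor_zero: "\<And>s t. s = 1 \<or> s = -1 \<Longrightarrow> b = 0 \<Longrightarrow> X + a * s = 0 \<Longrightarrow> v (t, s) = 0"
    using er_fun_horizontal_edges[OF p m a] orth unfolding v_def by blast
  obtain Y where ver_corner: "\<And>s t. s = 1 \<or> s = -1 \<Longrightarrow> t = 1 \<or> t = -1 \<Longrightarrow>
      v (s, t) = - b * legendre_end (m + 1) + t * (Y - a * s) * legendre_end m"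
    and ver_zero: "\<And>s t. s = 1 \<or> s = -1 \<Longrightarrow> b = 0 \<Longrightarrow> Y - a * s = 0 \<Longrightarrow> v (s, t) = 0"
    using er_fun_horizontal_edges[OF P2_swap[OF p] m, of "- a" "- b"] a orth
    unfolding swap by auto
  have "b = 0 \<and> a = 0 \<and> X = 0 \<and> Y = 0"
  proof (rule corner_compatibility[OF legendre_end_neq_0[of "m + 1"] legendre_end_neq_0[of m]])
    fix x y :: real
    assume "x = 1 \<or> x = -1" "y = 1 \<or> y = -1"
    then show "b * legendre_end (m + 1) + x * (X + a * y) * legendre_end m
             = - b * legendre_end (m + 1) + y * (Y - a * x) * legendre_end m"
      using hor_corner[of y x] ver_corner[of x y] by simp
  qed
  then show "\<And>t. v (t, 1) = 0" "\<And>t. v (t, -1) = 0" "\<And>t. v (1, t) = 0" "\<And>t. v (-1, t) = 0"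
    and "v \<in> P2 m"
    using hor_zero ver_zero p by (auto simp: v_def er_fun_def)
qed

theorem theorem3p5:
  fixes k :: nat and I :: "(real \<times> real) set" and v :: "real \<times> real \<Rightarrow> real"
  assumes I_small: "k \<le> 1 \<Longrightarrow> I = {}"
    and I_big: "k \<ge> 2 \<Longrightarrow> finite I \<and> card I = (2 * k - 1) * (k - 1)
                  \<and> I \<subseteq> Khat_interior \<and> unisolvent I (P2 (2 * k - 3))"
    and v_ER: "v \<in> ER (2 * k + 1)"
    and v_edge: "\<And>\<gamma> q. \<gamma> \<in> edges \<Longrightarrow> degree q \<le> 2 * k \<Longrightarrow>
                  integral {-1..1} (\<lambda>t. v (\<gamma> t) * poly q t) = 0"
    and v_I: "\<And>z. z \<in> I \<Longrightarrow> v z = 0"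
  shows "\<forall>z\<in>Khat. v z = 0"
proof -
  have orth: "integral {-1..1} (\<lambda>t. v (t, s) * poly q t) = 0 \<and>
              integral {-1..1} (\<lambda>t. v (s, t) * poly q t) = 0"
    if "s = 1 \<or> s = -1" "degree q < 2 * k + 1" for s q
    using v_edge[of "\<lambda>t. (t, s)" q] v_edge[of "\<lambda>t. (s, t)" q] that
    by (auto simp: edges_def)
  have boundary: "v \<in> P2 (2 * k + 1)" "\<And>t. v (1, t) = 0" "\<And>t. v (-1, t) = 0"
    "\<And>t. v (t, 1) = 0" "\<And>t. v (t, -1) = 0"
    using ER_edge_orthogonal_imp_boundary_zero[OF v_ER _ orth] by simp_all
  obtain w where w: "w \<in> P2 (2 * k - 3)" and w_small: "2 * k + 1 < 4 \<Longrightarrow> w = (\<lambda>_. 0)"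
    and vw: "\<And>x y. v (x, y) = (1 - x\<^sup>2) * (1 - y\<^sup>2) * w (x, y)"
    using P2_vanishing_on_square_boundary[OF boundary] by (auto simp: numeral_eq_Suc)
  \<comment> \<open>for \<open>k \<le> 1\<close> the factor \<open>w\<close> vanishes for degree reasons\<close>
  have "w = (\<lambda>_. 0)"
  proof (cases "k \<le> 1")
    case False
    have "v z = (1 - (fst z)\<^sup>2) * (1 - (snd z)\<^sup>2) * w z" for z
      using vw[of "fst z" "snd z"] by simp
    with False I_big v_I w show ?thesis by (intro unisolvent_bubble_multiple_eq_0) auto
  qed (use w_small in simp)
  then show ?thesis by (auto simp: vw)
qed

end
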